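(* Let $\ell$ and $m$ be positive integers with $\ell\le m$, let $G$ be a group written additively, and let $\mathbf{a}=(a_1,\dots,a_m)$ be a sequence of elements of $G$. Then at least one of the following holds: (1) $|\Sigma^{\ell}(\mathbf{a})|\ge\min(p(G),\ m-\ell+1)$; (2) there exists $i\in[1,m]$ such that $\ell a_i\in\Sigma^{\ell}(\mathbf{a})$.
   Context: $p(G)$ is the order of the smallest nontrivial subgroup of $G$, or $\infty$ if no such subgroup exists. $\ell a_i$ denotes $a_i+\cdots+a_i$ ($\ell$ times). $\Sigma^{\ell}(\mathbf{a})$ is the set of all elements $a_{i_1}+\cdots+a_{i_\ell}$ with $i_1,\dots,i_\ell\in[1,m]$ pairwise distinct, taken in any order. *)

theory Defs
  imports Main "HOL-Library.Extended_Nat"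
begin

text \<open>Subgroups of an additively written (not necessarily abelian) group, given as a type
  of class group_add; the group G is the whole type.\<close>
definition add_subgroup :: "'a::group_add set \<Rightarrow> bool" where
  "add_subgroup H \<longleftrightarrow> 0 \<in> H \<and> (\<forall>x\<in>H. \<forall>y\<in>H. x + y \<in> H) \<and> (\<forall>x\<in>H. - x \<in> H)"

definition set_order :: "'a set \<Rightarrow> enat" where
  "set_order H = (if finite H then enat (card H) else \<infinity>)"

text \<open>p(G): order of the smallest nontrivial subgroup, or infinity if none exists
  (Inf of the empty set of enat is infinity).\<close>
definition p_grp :: "'a::group_add itself \<Rightarrow> enat" where
  "p_grp _ = Inf {set_order H | H::'a set. add_subgroup H \<and> H \<noteq> {0}}"

text \<open>\<Sigma>^l(a) for a = (a 1, ..., a m): sums a_{i1} + ... + a_{il} over pairwise distinct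
  indices in [1,m], taken in any order.\<close>
definition Sigma_l :: "nat \<Rightarrow> nat \<Rightarrow> (nat \<Rightarrow> 'a::group_add) \<Rightarrow> 'a set" where
  "Sigma_l l m a = {sum_list (map a is) | is. length is = l \<and> distinct is \<and> set is \<subseteq> {1..m}}"

end

theory Submission
  imports Defs "HOL-Library.Set_Algebras"
begin

(* Kemperman's theorem, |A + B| >= min (p(G), |A| + |B| - 1) in every group, is proved by Kemperman's
   transform.  If a + b = a' + b' with a \<noteq> a', put g = -a + a' \<noteq> 0; both pairs
   (A \<union> (A + g), B \<inter> (-g + B)) and (A \<inter> (A + g), B \<union> (-g + B)) have sumset inside A + B, and one of
   them has larger |A| + |B|, or the same |A| + |B| and a smaller second set.  The only obstruction is
   B \<inter> (-g + B) = B, i.e. g + B \<subseteq> B; then the stabilizer of B is a nontrivial subgroup of order at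
   most |B|.

   The theorem then follows by induction on l, over an arbitrary finite index set K.  Let T \<subseteq> K
   carry each of the d values of a exactly once.  If d >= |K| - l + 1, pick |K| - l + 1 indices of T;
   adding a fixed sum over l - 1 of the remaining indices to their values gives as many sums.  Otherwise
   |K - T| >= l and the induction hypothesis for level l - 1 on K - T either yields (l - 1) a_i there,
   to which the value a_t = a_i with t in T is added, or bounds Sigma^(l-1)(K - T) from below, and
   Kemperman's theorem for a(T) + Sigma^(l-1)(K - T) \<subseteq> Sigma^l(K) gives the bound at level l. *)

lemma p_grp_le_set_order:
  fixes H :: "'a::group_add set"
  assumes "add_subgroup H" and "H \<noteq> {0}"
  shows "p_grp TYPE('a) \<le> set_order H"
  unfolding p_grp_def by (rule Inf_lower) (use assms in blast)

lemma add_subgroup_left_stabilizer: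
  fixes B :: "'a::group_add set"
  shows "add_subgroup {h. (+) h ` B = B}"
proof -
  have comp: "(+) (h + k) ` B = (+) h ` (+) k ` B" for h k :: 'a
    by (simp add: image_image add.assoc)
  show ?thesis
    unfolding add_subgroup_def
  proof (intro conjI ballI)
    fix x y assume "x \<in> {h. (+) h ` B = B}" and "y \<in> {h. (+) h ` B = B}"
    then show "x + y \<in> {h. (+) h ` B = B}"
      by (simp add: comp)
  next
    fix x assume "x \<in> {h. (+) h ` B = B}"
    then have "(+) (- x) ` B = (+) (- x + x) ` B"
      by (simp only: comp mem_Collect_eq)
    then show "- x \<in> {h. (+) h ` B = B}"
      by simp
  qed simp
qed

lemma p_grp_le_card_if_translation_invariant:
  fixes B :: "'a::group_add set"
  assumes "finite B" and "b \<in> B" and "g \<noteq> 0" and "(+) g ` B \<subseteq> B"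
  shows "p_grp TYPE('a) \<le> enat (card B)"
proof -
  define H where "H = {h. (+) h ` B = B}"
  have "(+) g ` B = B"
    using assms(1,4) by (intro card_subset_eq) (auto intro: card_image inj_onI)
  then have "g \<in> H" and "H \<noteq> {0}"
    using \<open>g \<noteq> 0\<close> by (auto simp: H_def)
  have H_sub: "H \<subseteq> (\<lambda>z. z - b) ` B"
  proof
    fix h assume "h \<in> H"
    then have "h + b \<in> B"
      using \<open>b \<in> B\<close> by (auto simp: H_def)
    then show "h \<in> (\<lambda>z. z - b) ` B"
      by (rule rev_image_eqI) simp
  qed
  with assms(1) have "finite H"
    by (rule finite_surj)
  from \<open>finite B\<close> H_sub have "card H \<le> card ((\<lambda>z. z - b) ` B)"
    by (intro card_mono) auto
  also have "\<dots> \<le> card B"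
    by (rule card_image_le[OF \<open>finite B\<close>])
  finally have "set_order H \<le> enat (card B)"
    using \<open>finite H\<close> by (simp add: set_order_def)
  moreover have "p_grp TYPE('a) \<le> set_order H"
    using add_subgroup_left_stabilizer \<open>H \<noteq> {0}\<close> unfolding H_def
    by (rule p_grp_le_set_order)
  ultimately show ?thesis
    by simp
qed

lemma card_le_card_set_plus_left:
  fixes A B :: "'a::cancel_semigroup_add set"
  assumes "finite (A + B)" and "b \<in> B"
  shows "card A \<le> card (A + B)"
proof -
  have "card A = card ((\<lambda>x. x + b) ` A)"
    by (simp add: card_image inj_on_def)
  also have "\<dots> \<le> card (A + B)"
    using assms by (intro card_mono) auto
  finally show ?thesis .
qed

lemma card_le_card_set_plus_right:
  fixes A B :: "'a::cancel_semigroup_add set"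
  assumes "finite (A + B)" and "a \<in> A"
  shows "card B \<le> card (A + B)"
proof -
  have "card B = card ((+) a ` B)"
    by (simp add: card_image inj_on_def)
  also have "\<dots> \<le> card (A + B)"
    using assms by (intro card_mono) auto
  finally show ?thesis .
qed

lemma card_set_plus_eq_mult:
  assumes "inj_on (\<lambda>(x, y). x + y) (A \<times> B)"
  shows "card (A + B) = card A * card B"
  using card_image[OF assms] by (simp add: set_plus_image card_cartesian_product)

lemma non_injective_set_plus_obtain_translation:
  fixes A B :: "'a::group_add set"
  assumes "\<not> inj_on (\<lambda>(x, y). x + y) (A \<times> B)"
  obtains a b g where "a \<in> A" "a + g \<in> A" "b \<in> B" "g + b \<in> B" "g \<noteq> 0"
proof -
  obtain a a' b b' where "a \<in> A" "a' \<in> A" "b \<in> B" "b' \<in> B" "a + b = a' + b'"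
    and "(a, b) \<noteq> (a', b')"
    using assms unfolding inj_on_def by auto
  moreover from this have "a \<noteq> a'"
    by auto
  moreover have "a + (- a + a') = a'" and "- a + a' + b' = b"
    by (simp_all add: add.assoc[symmetric]) (simp add: add.assoc \<open>a + b = a' + b'\<close>[symmetric])
  ultimately show ?thesis
    by (intro that[of a "- a + a'" b']) auto
qed

lemma card_Un_Int_image:
  assumes "finite A" and "inj_on f A"
  shows "card (A \<union> f ` A) + card (A \<inter> f ` A) = 2 * card A"
  using card_Un_Int[of A "f ` A"] assms(1) card_image[OF assms(2)] by simp

lemma kemperman_transform_subset:
  fixes A B :: "'a::group_add set"
  shows "(A \<union> (\<lambda>x. x + g) ` A) + (B \<inter> (+) (- g) ` B) \<subseteq> A + B"
    and "(A \<inter> (\<lambda>x. x + g) ` A) + (B \<union> (+) (- g) ` B) \<subseteq> A + B"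
  by (auto simp: set_plus_def add.assoc) (metis add.assoc add_minus_cancel)+

lemma kemperman_transform:
  fixes A B :: "'a::group_add set"
  assumes "finite A" "finite B" "a \<in> A" "a + g \<in> A" "b \<in> B" "g + b \<in> B"
    and "\<not> (+) g ` B \<subseteq> B"
  obtains A' B' where "finite A'" "finite B'" "A' \<noteq> {}" "B' \<noteq> {}" "A' + B' \<subseteq> A + B"
    and "card A + card B \<le> card A' + card B'"
    and "card A + card B < card A' + card B' \<or> card B' < card B"
proof -
  define A\<^sub>1 A\<^sub>2 where "A\<^sub>1 = A \<union> (\<lambda>x. x + g) ` A" and "A\<^sub>2 = A \<inter> (\<lambda>x. x + g) ` A"
  define B\<^sub>1 B\<^sub>2 where "B\<^sub>1 = B \<inter> (+) (- g) ` B" and "B\<^sub>2 = B \<union> (+) (- g) ` B"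
  have card_A: "card A\<^sub>1 + card A\<^sub>2 = 2 * card A"
    unfolding A\<^sub>1_def A\<^sub>2_def by (rule card_Un_Int_image) (simp_all add: assms inj_on_def)
  have card_B: "card B\<^sub>2 + card B\<^sub>1 = 2 * card B"
    unfolding B\<^sub>1_def B\<^sub>2_def by (rule card_Un_Int_image) (simp_all add: assms inj_on_def)
  have "B \<noteq> B\<^sub>1"
  proof
    assume "B = B\<^sub>1"
    then have "(+) g ` B \<subseteq> (+) g ` (+) (- g) ` B"
      unfolding B\<^sub>1_def by blast
    then have "(+) g ` B \<subseteq> B"
      by (simp add: image_image add.assoc[symmetric])
    with assms(7) show False ..
  qed
  then have "card B\<^sub>1 < card B"
    using \<open>finite B\<close> by (intro psubset_card_mono) (auto simp: B\<^sub>1_def)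
  have "b \<in> B\<^sub>1"
    using assms(5,6) unfolding B\<^sub>1_def
    by (auto intro!: rev_image_eqI[of "g + b"] simp: add.assoc[symmetric])
  have "a + g \<in> A\<^sub>2"
    using assms(3,4) by (auto simp: A\<^sub>2_def)
  have nonempty: "A\<^sub>1 \<noteq> {}" "B\<^sub>2 \<noteq> {}"
    using assms(3,5) by (auto simp: A\<^sub>1_def B\<^sub>2_def)
  have fin: "finite A\<^sub>1" "finite A\<^sub>2" "finite B\<^sub>1" "finite B\<^sub>2"
    using assms(1,2) by (simp_all add: A\<^sub>1_def A\<^sub>2_def B\<^sub>1_def B\<^sub>2_def)
  have subset: "A\<^sub>1 + B\<^sub>1 \<subseteq> A + B" "A\<^sub>2 + B\<^sub>2 \<subseteq> A + B"
    unfolding A\<^sub>1_def A\<^sub>2_def B\<^sub>1_def B\<^sub>2_def by (rule kemperman_transform_subset)+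
  show thesis
  proof (cases "card A + card B \<le> card A\<^sub>1 + card B\<^sub>1")
    case True
    with \<open>card B\<^sub>1 < card B\<close> show thesis
      by (intro that[of A\<^sub>1 B\<^sub>1]) (use \<open>b \<in> B\<^sub>1\<close> nonempty fin subset in auto)
  next
    case False
    with card_A card_B have "card A + card B < card A\<^sub>2 + card B\<^sub>2"
      by linarith
    then show thesis
      by (intro that[of A\<^sub>2 B\<^sub>2]) (use \<open>a + g \<in> A\<^sub>2\<close> nonempty fin subset card_A card_B in auto)
  qed
qed

lemma card_set_plus_ge_if_injective:
  fixes A B :: "'a::plus set"
  assumes "A \<noteq> {}" "B \<noteq> {}" "finite A" "finite B" and "inj_on (\<lambda>(x, y). x + y) (A \<times> B)"
  shows "card A + card B - 1 \<le> card (A + B)"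
proof -
  have "card A \<noteq> 0" and "card B \<noteq> 0"
    using assms(1-4) by simp_all
  then have "card A + card B - 1 \<le> card A * card B"
    by (cases "card A"; cases "card B") auto
  then show ?thesis
    using card_set_plus_eq_mult[OF assms(5)] by simp
qed

lemma kemperman_transform_if_not_injective:
  fixes A B :: "'a::group_add set"
  assumes "finite A" "finite B" and "\<not> p_grp TYPE('a) \<le> enat (card B)"
    and "\<not> inj_on (\<lambda>(x, y). x + y) (A \<times> B)"
  obtains A' B' where "finite A'" "finite B'" "A' \<noteq> {}" "B' \<noteq> {}" "A' + B' \<subseteq> A + B"
    and "card A + card B \<le> card A' + card B'"
    and "card A + card B < card A' + card B' \<or> card B' < card B"
proof -
  obtain a b g where g: "a \<in> A" "a + g \<in> A" "b \<in> B" "g + b \<in> B" "g \<noteq> 0"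
    using assms(4) by (rule non_injective_set_plus_obtain_translation)
  have "\<not> (+) g ` B \<subseteq> B"
  proof
    assume "(+) g ` B \<subseteq> B"
    with assms(2,3) g(3,5) show False
      using p_grp_le_card_if_translation_invariant by blast
  qed
  with assms(1,2) g(1-4) show thesis
    using that by (rule kemperman_transform)
qed

theorem kemperman:
  fixes A B S :: "'a::group_add set"
  assumes "finite S" "finite A" "finite B" "A \<noteq> {}" "B \<noteq> {}" "A + B \<subseteq> S"
  shows "min (p_grp TYPE('a)) (enat (card A + card B - 1)) \<le> enat (card S)"
  using assms(2-)
  \<comment> \<open>Both components are bounded since |A|, |B| \<le> |S|; the transform decreases the pair lexicographically.\<close>
proof (induction "(A, B)" arbitrary: A B
    rule: wf_induct_rule[OF wf_measures[of "[\<lambda>(A, B). 2 * card S - (card A + card B), \<lambda>(A, B). card B]"]])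
  case (1 A B)
  let ?p = "p_grp TYPE('a)"
  have card_le_S: "card A' \<le> card S" "card B' \<le> card S"
    if "A' + B' \<subseteq> S" "A' \<noteq> {}" "B' \<noteq> {}" for A' B' :: "'a set"
  proof -
    have "finite (A' + B')" and "card (A' + B') \<le> card S"
      using \<open>finite S\<close> that(1) by (auto intro: finite_subset card_mono)
    with that(2,3) card_le_card_set_plus_left card_le_card_set_plus_right
    show "card A' \<le> card S" "card B' \<le> card S"
      by (meson ex_in_conv le_trans)+
  qed
  show ?case
  proof (cases "?p \<le> enat (card B)")
    case True
    with card_le_S[OF "1.prems"(5,3,4)] show ?thesis
      by (intro min.coboundedI1) (simp add: order_trans)
  next
    case p_gt: False
    show ?thesis
    proof (cases "inj_on (\<lambda>(x, y). x + y) (A \<times> B)")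
      case True
      then have "card A + card B - 1 \<le> card (A + B)"
        using "1.prems" by (intro card_set_plus_ge_if_injective) auto
      also have "\<dots> \<le> card S"
        using \<open>finite S\<close> "1.prems"(5) by (rule card_mono)
      finally show ?thesis
        by (intro min.coboundedI2) simp
    next
      case False
      with "1.prems"(1,2) p_gt obtain A' B' where A'B': "finite A'" "finite B'" "A' \<noteq> {}" "B' \<noteq> {}"
        and "A' + B' \<subseteq> A + B" and larger: "card A + card B \<le> card A' + card B'"
        and "card A + card B < card A' + card B' \<or> card B' < card B"
        by (rule kemperman_transform_if_not_injective)
      from \<open>A' + B' \<subseteq> A + B\<close> "1.prems"(5) have "A' + B' \<subseteq> S"
        by (rule order_trans)
      with larger \<open>card A + card B < card A' + card B' \<or> card B' < card B\<close>
        card_le_S[OF \<open>A' + B' \<subseteq> S\<close> A'B'(3,4)]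
      have measure_decreases: "2 * card S - (card A' + card B') < 2 * card S - (card A + card B)
        \<or> 2 * card S - (card A' + card B') = 2 * card S - (card A + card B) \<and> card B' < card B"
        by linarith
      have "min ?p (enat (card A + card B - 1)) \<le> min ?p (enat (card A' + card B' - 1))"
        using larger by (intro min.mono) auto
      also have "\<dots> \<le> enat (card S)"
        using measure_decreases \<open>A' + B' \<subseteq> S\<close> A'B' by (intro "1.hyps") simp_all
      finally show ?thesis .
    qed
  qed
qed

lemma min_enat_add_mono:
  assumes "min p (enat c) \<le> enat s"
  shows "min p (enat (c + k)) \<le> min p (enat (s + k))"
  using assms by (cases p) (auto simp: min_def split: if_splits)

text \<open>Sigma_l with an arbitrary index set, so that the induction can discard indices.\<close>

definition Sigma_on :: "nat \<Rightarrow> 'i set \<Rightarrow> ('i \<Rightarrow> 'a::monoid_add) \<Rightarrow> 'a set" where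
  "Sigma_on l K a = {sum_list (map a ks) | ks. length ks = l \<and> distinct ks \<and> set ks \<subseteq> K}"

lemma Sigma_l_eq_Sigma_on: "Sigma_l l m a = Sigma_on l {1..m} a"
  by (simp add: Sigma_l_def Sigma_on_def)

lemma finite_Sigma_on:
  assumes "finite K"
  shows "finite (Sigma_on l K a)"
proof -
  have "Sigma_on l K a \<subseteq> (\<lambda>ks. sum_list (map a ks)) ` {ks. set ks \<subseteq> K \<and> length ks = l}"
    unfolding Sigma_on_def by blast
  then show ?thesis
    by (rule finite_subset) (intro finite_imageI finite_lists_length_eq assms)
qed

lemma Sigma_on_nonempty:
  assumes "finite K" and "l \<le> card K"
  shows "Sigma_on l K a \<noteq> {}"
proof -
  obtain T where "T \<subseteq> K" and "card T = l"
    using obtain_subset_with_card_n[OF assms(2)] by blast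
  moreover obtain ks where "set ks = T" and "distinct ks"
    using finite_distinct_list finite_subset[OF \<open>T \<subseteq> K\<close> assms(1)] by blast
  moreover from calculation have "length ks = l"
    using distinct_card by fastforce
  ultimately have "sum_list (map a ks) \<in> Sigma_on l K a"
    unfolding Sigma_on_def by blast
  then show ?thesis
    by blast
qed

lemma Sigma_on_one: "Sigma_on 1 K a = a ` K"
proof (intro equalityI subsetI)
  fix x assume "x \<in> Sigma_on 1 K a"
  then show "x \<in> a ` K"
    unfolding Sigma_on_def by (auto simp: length_Suc_conv)
next
  fix x assume "x \<in> a ` K"
  then obtain k where "k \<in> K" and "x = sum_list (map a [k])"
    by auto
  then show "x \<in> Sigma_on 1 K a"
    unfolding Sigma_on_def by (intro CollectI exI[of _ "[k]"]) simp
qed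

lemma set_plus_Sigma_on_subset:
  assumes "J \<inter> K = {}"
  shows "Sigma_on l J a + Sigma_on l' K a \<subseteq> Sigma_on (l + l') (J \<union> K) a"
proof
  fix x assume "x \<in> Sigma_on l J a + Sigma_on l' K a"
  then obtain js ks where "x = sum_list (map a js) + sum_list (map a ks)"
    and "length js = l" "distinct js" "set js \<subseteq> J" "length ks = l'" "distinct ks" "set ks \<subseteq> K"
    unfolding Sigma_on_def set_plus_def by blast
  with assms have "x = sum_list (map a (js @ ks))" and "length (js @ ks) = l + l'"
    and "distinct (js @ ks)" and "set (js @ ks) \<subseteq> J \<union> K"
    by auto
  then show "x \<in> Sigma_on (l + l') (J \<union> K) a"
    unfolding Sigma_on_def by blast
qed

lemma image_plus_Sigma_on_Diff_subset:
  assumes "T \<subseteq> K"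
  shows "a ` T + Sigma_on l (K - T) a \<subseteq> Sigma_on (Suc l) K a"
  using set_plus_Sigma_on_subset[where J = T and K = "K - T" and l = 1 and l' = l, unfolded Sigma_on_one]
    assms by (simp add: Un_absorb1)

lemma replicate_in_Sigma_on_SucI:
  assumes "T \<subseteq> K" and "a i \<in> a ` T" and "sum_list (replicate l (a i)) \<in> Sigma_on l (K - T) a"
  shows "sum_list (replicate (Suc l) (a i)) \<in> Sigma_on (Suc l) K a"
proof -
  have "a i + sum_list (replicate l (a i)) \<in> a ` T + Sigma_on l (K - T) a"
    using assms(2,3) by (rule set_plus_intro)
  with image_plus_Sigma_on_Diff_subset[OF assms(1)] show ?thesis
    by auto
qed

lemma card_Sigma_on_Suc_ge:
  fixes a :: "'i \<Rightarrow> 'a::group_add"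
  assumes "finite K" and "l < card K"
  shows "min (card (a ` K)) (card K - l) \<le> card (Sigma_on (Suc l) K a)"
proof -
  obtain T\<^sub>0 where "T\<^sub>0 \<subseteq> K" "inj_on a T\<^sub>0" "a ` K = a ` T\<^sub>0"
    using subset_image_inj[of "a ` K" a K] by blast
  then have "min (card (a ` K)) (card K - l) \<le> card T\<^sub>0"
    by (simp add: card_image)
  then obtain T where "T \<subseteq> T\<^sub>0" and card_T: "card T = min (card (a ` K)) (card K - l)"
    by (rule obtain_subset_with_card_n)
  with \<open>T\<^sub>0 \<subseteq> K\<close> \<open>inj_on a T\<^sub>0\<close> have "T \<subseteq> K" and "inj_on a T"
    by (auto intro: inj_on_subset)
  then have "l \<le> card (K - T)"
    using card_Diff_subset[of T K] finite_subset[OF _ assms(1)] card_T assms(2) by simp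
  then obtain s where s: "s \<in> Sigma_on l (K - T) a"
    using Sigma_on_nonempty[of "K - T" l a] assms(1) by blast
  have "(\<lambda>x. x + s) ` a ` T \<subseteq> a ` T + Sigma_on l (K - T) a"
    using s by blast
  also have "\<dots> \<subseteq> Sigma_on (Suc l) K a"
    using \<open>T \<subseteq> K\<close> by (rule image_plus_Sigma_on_Diff_subset)
  finally have "card ((\<lambda>x. x + s) ` a ` T) \<le> card (Sigma_on (Suc l) K a)"
    by (rule card_mono[OF finite_Sigma_on[OF assms(1)]])
  moreover have "card ((\<lambda>x. x + s) ` a ` T) = card T"
    using \<open>inj_on a T\<close> by (simp add: card_image inj_on_def)
  ultimately show ?thesis
    using card_T by simp
qed

lemma kemperman_Sigma_on_Suc:
  fixes a :: "'i \<Rightarrow> 'a::group_add"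
  assumes "finite K" "T \<subseteq> K" "T \<noteq> {}" "inj_on a T" "l \<le> card (K - T)"
    and "min (p_grp TYPE('a)) (enat (card (K - T) - l + 1)) \<le> enat (card (Sigma_on l (K - T) a))"
  shows "min (p_grp TYPE('a)) (enat (card K - l)) \<le> enat (card (Sigma_on (Suc l) K a))"
proof -
  let ?p = "p_grp TYPE('a)" and ?\<Sigma> = "Sigma_on l (K - T) a"
  have "finite T"
    using assms(1,2) by (rule finite_subset[rotated])
  then have "card (K - T) = card K - card T" and "card T \<le> card K" and "card T \<noteq> 0"
    using assms(1-3) by (simp_all add: card_Diff_subset card_mono)
  with assms(5) have "card K - l = (card (K - T) - l + 1) + (card T - 1)"
    by linarith
  then have "min ?p (enat (card K - l)) \<le> min ?p (enat (card ?\<Sigma> + (card T - 1)))"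
    using min_enat_add_mono[OF assms(6)] by simp
  also have "\<dots> = min ?p (enat (card (a ` T) + card ?\<Sigma> - 1))"
    using card_image[OF assms(4)] \<open>card T \<noteq> 0\<close> by (simp add: add.commute)
  also have "\<dots> \<le> enat (card (Sigma_on (Suc l) K a))"
    using kemperman[OF finite_Sigma_on[OF assms(1)] finite_imageI[OF \<open>finite T\<close>]
        finite_Sigma_on[OF finite_Diff[OF assms(1)]] _ Sigma_on_nonempty[OF finite_Diff[OF assms(1)] assms(5)]
        image_plus_Sigma_on_Diff_subset[OF assms(2)]] assms(3)
    by blast
  finally show ?thesis .
qed

lemma card_Sigma_on_ge_or_repeated_sum:
  fixes a :: "'i \<Rightarrow> 'a::group_add"
  assumes "1 \<le> l" and "finite K" and "l \<le> card K"
  shows "min (p_grp TYPE('a)) (enat (card K - l + 1)) \<le> enat (card (Sigma_on l K a))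
    \<or> (\<exists>i\<in>K. sum_list (replicate l (a i)) \<in> Sigma_on l K a)"
  using assms
proof (induction l arbitrary: K rule: nat_induct_at_least)
  case base
  then obtain i where "i \<in> K"
    by fastforce
  then have "sum_list (replicate 1 (a i)) \<in> Sigma_on 1 K a"
    unfolding Sigma_on_one by simp
  with \<open>i \<in> K\<close> show ?case
    by blast
next
  case (Suc l)
  show ?case
  proof (cases "card K - l \<le> card (a ` K)")
    case True
    then have "card K - l \<le> card (Sigma_on (Suc l) K a)"
      using card_Sigma_on_Suc_ge[where K = K and l = l and a = a] Suc.prems by simp
    then show ?thesis
      using Suc.prems by (intro disjI1 min.coboundedI2) simp
  next
    case False
    obtain T\<^sub>0 where T\<^sub>0: "T\<^sub>0 \<subseteq> K" "inj_on a T\<^sub>0" "a ` K = a ` T\<^sub>0"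
      using subset_image_inj[of "a ` K" a K] by blast
    with False Suc.prems(1) have "l \<le> card (K - T\<^sub>0)"
      by (simp add: card_Diff_subset finite_subset card_image)
    from Suc.IH[OF finite_Diff[OF Suc.prems(1)] this] show ?thesis
    proof (elim disjE bexE)
      assume "min (p_grp TYPE('a)) (enat (card (K - T\<^sub>0) - l + 1))
        \<le> enat (card (Sigma_on l (K - T\<^sub>0) a))"
      with Suc.prems T\<^sub>0 \<open>l \<le> card (K - T\<^sub>0)\<close> have "min (p_grp TYPE('a)) (enat (card K - l)) \<le> enat (card (Sigma_on (Suc l) K a))"
        by (intro kemperman_Sigma_on_Suc) auto
      with Suc.prems show ?thesis
        by (simp add: Suc_diff_Suc)
    next
      fix i assume "i \<in> K - T\<^sub>0" and "sum_list (replicate l (a i)) \<in> Sigma_on l (K - T\<^sub>0) a"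
      with T\<^sub>0 have "sum_list (replicate (Suc l) (a i)) \<in> Sigma_on (Suc l) K a"
        by (intro replicate_in_Sigma_on_SucI) auto
      with \<open>i \<in> K - T\<^sub>0\<close> show ?thesis
        by blast
    qed
  qed
qed

theorem theorem6p5:
  fixes l m :: nat and a :: "nat \<Rightarrow> 'a::group_add"
  assumes "1 \<le> l" and "l \<le> m"
  shows "enat (card (Sigma_l l m a)) \<ge> min (p_grp TYPE('a)) (enat (m - l + 1))
         \<or> (\<exists>i\<in>{1..m}. sum_list (replicate l (a i)) \<in> Sigma_l l m a)"
  using card_Sigma_on_ge_or_repeated_sum[OF assms(1), where K = "{1..m}" and a = a] assms(2)
  by (simp add: Sigma_l_eq_Sigma_on)

end
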